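(* Let $(G,S)$ be an orientable ribbon graph, let $\Sigma$ be the closed surface obtained from $S$ by attaching a disk along each boundary component, and let $g$ be the genus of $\Sigma$. Then $$BR_{G,S}(X,Y,Z)=Y^{g}\,P_{G,\Sigma}(X-1,\,Y,\,YZ^2,\,Y^{-1}).$$
   Context: An orientable ribbon graph $(G,S)$ is a graph $G$ embedded in a compact orientable surface with boundary $S$ such that the inclusion is a homotopy equivalence; $S$ is viewed as a union of disks (neighborhoods of vertices) and bands (neighborhoods of edges). A spanning subgraph $H\subset G$ inherits a ribbon structure: its surface is the union of all vertex disks and the bands of the edges of $H$. The Bollobás–Riordan polynomial is $$BR_{G,S}(X,Y,Z)=\sum_{H\subset G}(X-1)^{r(G)-r(H)}\,Y^{n(H)}\,Z^{c(H)-bc(H)+n(H)},$$ where $c(H)$ is the number of components of $H$, $r(H)=v(G)-c(H)$, $n(H)=e(H)-r(H)$ (with $v,e$ numbers of vertices and edges), and $bc(H)$ is the number of boundary components of the surface of the ribbon subgraph $H$. For a graph $G$ in a closed orientable surface $\Sigma$ and a spanning subgraph $H$: $k(H)=\dim\ker\big(H_1(H;\mathbb R)\to H_1(\Sigma;\mathbb R)\big)$; $s(H)$ is twice the genus of a regular neighborhood $\mathcal H$ of $H$ in $\Sigma$ (genus of a surface with boundary meaning the genus after capping boundary circles with disks); $s^{\perp}(H)$ is twice the genus of $\Sigma\smallsetminus\mathcal H$; and $$P_{G,\Sigma}(X,Y,A,B)=\sum_{H\subset G} X^{c(H)-c(G)}\,Y^{k(H)}\,A^{s(H)/2}\,B^{s^{\perp}(H)/2}.$$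 *)

theory Defs
  imports "HOL-Analysis.Analysis"
begin

text \<open>Combinatorial model of an orientable ribbon graph (rotation system).
  Darts (half-edges) form the finite type 'd; V is the finite vertex set,
  vert d is the vertex at which dart d is attached, sigma is the cyclic
  rotation of darts around each vertex (induced by the orientation of S),
  and alpha is the fixed-point-free involution pairing the two darts of an
  edge.  Vertices with no darts are isolated vertices.\<close>

definition ribbon_graph ::
  "'v set \<Rightarrow> ('d::finite \<Rightarrow> 'v) \<Rightarrow> ('d \<Rightarrow> 'd) \<Rightarrow> ('d \<Rightarrow> 'd) \<Rightarrow> bool" where
  "ribbon_graph V vert \<sigma> \<alpha> \<longleftrightarrow>
     finite V \<and> (\<forall>d. vert d \<in> V) \<and> bij \<sigma> \<and>
     (\<forall>d. vert (\<sigma> d) = vert d) \<and>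
     (\<forall>d d'. vert d = vert d' \<longrightarrow> (\<exists>n. (\<sigma> ^^ n) d = d')) \<and>
     (\<forall>d. \<alpha> (\<alpha> d) = d \<and> \<alpha> d \<noteq> d)"

text \<open>Edges of G: the alpha-orbits. A spanning subgraph is a set of edges.\<close>
definition edges :: "('d \<Rightarrow> 'd) \<Rightarrow> 'd set set" where
  "edges \<alpha> = {{d, \<alpha> d} | d. True}"

definition orbit :: "('a \<Rightarrow> 'a) \<Rightarrow> 'a \<Rightarrow> 'a set" where
  "orbit f d = {(f ^^ k) d | k. True}"

definition ncomp :: "'v set \<Rightarrow> ('d \<Rightarrow> 'v) \<Rightarrow> ('d \<Rightarrow> 'd) \<Rightarrow> 'd set set \<Rightarrow> nat" where
  "ncomp V vert \<alpha> H =
     card {({(vert d, vert (\<alpha> d)) | d. d \<in> \<Union>H}\<^sup>*) `` {v} | v. v \<in> V}"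

text \<open>Rotation induced on the darts of H (ribbon subgraph structure).\<close>
definition induced_rot :: "('d \<Rightarrow> 'd) \<Rightarrow> 'd set \<Rightarrow> 'd \<Rightarrow> 'd" where
  "induced_rot \<sigma> D d = (\<sigma> ^^ (LEAST k. 0 < k \<and> (\<sigma> ^^ k) d \<in> D)) d"

text \<open>Number of boundary components of the surface of the ribbon subgraph H:
  the orbits of the face permutation (induced rotation composed with alpha)
  on the darts of H, plus one boundary circle for each vertex of V carrying
  no dart of H.\<close>
definition bc :: "'v set \<Rightarrow> ('d \<Rightarrow> 'v) \<Rightarrow> ('d \<Rightarrow> 'd) \<Rightarrow> ('d \<Rightarrow> 'd) \<Rightarrow> 'd set set \<Rightarrow> nat" where
  "bc V vert \<sigma> \<alpha> H =
     card {orbit (induced_rot \<sigma> (\<Union>H) \<circ> \<alpha>) d | d. d \<in> \<Union>H}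
     + card {v \<in> V. \<forall>d. vert d = v \<longrightarrow> d \<notin> \<Union>H}"

definition BR :: "'v set \<Rightarrow> ('d::finite \<Rightarrow> 'v) \<Rightarrow> ('d \<Rightarrow> 'd) \<Rightarrow> ('d \<Rightarrow> 'd)
                   \<Rightarrow> real \<Rightarrow> real \<Rightarrow> real \<Rightarrow> real" where
  "BR V vert \<sigma> \<alpha> X Y Z =
     (let E = edges \<alpha>;
          r = (\<lambda>H. int (card V) - int (ncomp V vert \<alpha> H));
          n = (\<lambda>H. int (card H) - r H)
      in \<Sum>H\<in>Pow E. (X - 1) powi (r E - r H) * Y powi (n H)
                    * Z powi (int (ncomp V vert \<alpha> H) - int (bc V vert \<sigma> \<alpha> H) + n H))"

text \<open>Faces of G (2-cells of the closed surface Sigma obtained by capping):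
  as dart sets, the orbits of sigma o alpha.  Together with one capping disk
  for each isolated vertex, their number is bc(G).\<close>
definition faces :: "('d \<Rightarrow> 'd) \<Rightarrow> ('d \<Rightarrow> 'd) \<Rightarrow> 'd set set" where
  "faces \<sigma> \<alpha> = {orbit (\<sigma> \<circ> \<alpha>) d | d. True}"

text \<open>Genus of Sigma (sum of the genera of its components), via Euler characteristic
  v - e + f = 2 c - 2 g of the cellular decomposition of Sigma.\<close>
definition genus_closed :: "'v set \<Rightarrow> ('d::finite \<Rightarrow> 'v) \<Rightarrow> ('d \<Rightarrow> 'd) \<Rightarrow> ('d \<Rightarrow> 'd) \<Rightarrow> int" where
  "genus_closed V vert \<sigma> \<alpha> =
     (2 * int (ncomp V vert \<alpha> (edges \<alpha>)) - int (card V) + int (card (edges \<alpha>))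
      - int (bc V vert \<sigma> \<alpha> (edges \<alpha>))) div 2"

text \<open>s(H): twice the genus of the regular neighbourhood of H in Sigma
  (= the surface of the ribbon subgraph H), via its Euler characteristic.\<close>
definition s_nbhd :: "'v set \<Rightarrow> ('d::finite \<Rightarrow> 'v) \<Rightarrow> ('d \<Rightarrow> 'd) \<Rightarrow> ('d \<Rightarrow> 'd) \<Rightarrow> 'd set set \<Rightarrow> int" where
  "s_nbhd V vert \<sigma> \<alpha> H =
     2 * int (ncomp V vert \<alpha> H) - int (card V) + int (card H) - int (bc V vert \<sigma> \<alpha> H)"

text \<open>The complement of the neighbourhood of H in Sigma consists of the 2-cells of
  Sigma (the faces of G and the caps of the isolated vertices) joined by the bands
  of the edges not in H; its boundary is the boundary of the neighbourhood.
  Components: classes of 2-cells under adjacency across edges not in H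
  (isolated-vertex caps are singleton classes).\<close>
definition ncomp_compl :: "'v set \<Rightarrow> ('d::finite \<Rightarrow> 'v) \<Rightarrow> ('d \<Rightarrow> 'd) \<Rightarrow> ('d \<Rightarrow> 'd) \<Rightarrow> 'd set set \<Rightarrow> nat" where
  "ncomp_compl V vert \<sigma> \<alpha> H =
     card {({(f1, f2) | f1 f2 d. f1 \<in> faces \<sigma> \<alpha> \<and> f2 \<in> faces \<sigma> \<alpha> \<and>
                               d \<notin> \<Union>H \<and> d \<in> f1 \<and> \<alpha> d \<in> f2}\<^sup>*) `` {f} | f. f \<in> faces \<sigma> \<alpha>}
     + card {v \<in> V. \<forall>d. vert d \<noteq> v}"

text \<open>s-perp(H): twice the genus of the complement, via Euler characteristic
  (2-cells minus bands of edges not in H).\<close>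
definition s_perp :: "'v set \<Rightarrow> ('d::finite \<Rightarrow> 'v) \<Rightarrow> ('d \<Rightarrow> 'd) \<Rightarrow> ('d \<Rightarrow> 'd) \<Rightarrow> 'd set set \<Rightarrow> int" where
  "s_perp V vert \<sigma> \<alpha> H =
     2 * int (ncomp_compl V vert \<sigma> \<alpha> H) - int (bc V vert \<sigma> \<alpha> (edges \<alpha>))
     + int (card (edges \<alpha> - H)) - int (bc V vert \<sigma> \<alpha> H)"

text \<open>Real cellular 1-chains: antisymmetric functions on darts (x (alpha d) = - x d).
  Cycles of H: chains supported on the darts of H with zero boundary at every vertex.
  Boundaries in Sigma: span of the boundary chains of the 2-cells (faces).
  k(H) = dim ker (H_1(H;R) -> H_1(Sigma;R)) = dim (Z_1(H) inter B_1(Sigma)).\<close>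
definition cycles :: "('d::finite \<Rightarrow> 'v) \<Rightarrow> ('d \<Rightarrow> 'd) \<Rightarrow> 'd set set \<Rightarrow> (real ^ 'd) set" where
  "cycles vert \<alpha> H =
     {x. (\<forall>d. x $ (\<alpha> d) = - (x $ d)) \<and> (\<forall>d. d \<notin> \<Union>H \<longrightarrow> x $ d = 0) \<and>
         (\<forall>v. (\<Sum>d\<in>{d. vert d = v}. x $ d) = 0)}"

definition face_chain :: "('d::finite \<Rightarrow> 'd) \<Rightarrow> 'd set \<Rightarrow> real ^ 'd" where
  "face_chain \<alpha> f = (\<chi> d. (if d \<in> f then 1 else 0) - (if \<alpha> d \<in> f then 1 else 0))"

definition k_ker :: "('d::finite \<Rightarrow> 'v) \<Rightarrow> ('d \<Rightarrow> 'd) \<Rightarrow> ('d \<Rightarrow> 'd) \<Rightarrow> 'd set set \<Rightarrow> nat" where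
  "k_ker vert \<sigma> \<alpha> H = dim (cycles vert \<alpha> H \<inter> span (face_chain \<alpha> ` faces \<sigma> \<alpha>))"

definition P_poly :: "'v set \<Rightarrow> ('d::finite \<Rightarrow> 'v) \<Rightarrow> ('d \<Rightarrow> 'd) \<Rightarrow> ('d \<Rightarrow> 'd)
                   \<Rightarrow> real \<Rightarrow> real \<Rightarrow> real \<Rightarrow> real \<Rightarrow> real" where
  "P_poly V vert \<sigma> \<alpha> X Y A B =
     (\<Sum>H\<in>Pow (edges \<alpha>).
        X powi (int (ncomp V vert \<alpha> H) - int (ncomp V vert \<alpha> (edges \<alpha>)))
        * Y powi int (k_ker vert \<sigma> \<alpha> H)
        * A powi (s_nbhd V vert \<sigma> \<alpha> H div 2)
        * B powi (s_perp V vert \<sigma> \<alpha> H div 2))"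

end

theory Submission
  imports Defs "HOL-Combinatorics.Cycles"
begin

text \<open>Both sides are sums over the spanning subgraphs \<open>H\<close>, and they agree term by term once
  the exponents are compared. First, \<open>s(H)\<close> is even: on the darts of \<open>H\<close>
  the boundary permutation of the ribbon subgraph is the induced rotation composed with the edge
  involution, and comparing signs shows that the numbers of vertices, edges and boundary components
  of \<open>H\<close> add up to an even number. Second, \<open>k(H) = c(\<Sigma> \<setminus> H) - c(\<Sigma>)\<close>: the boundaries of
  \<open>\<Sigma>\<close> are the images of face-constant 2-chains under the boundary map, such a boundary is a cycle
  of \<open>H\<close> exactly when its 2-chain is also constant across every edge outside \<open>H\<close>, and by
  rank--nullity these boundaries span a space whose dimension is the number of regions of
  \<open>\<Sigma> \<setminus> H\<close> minus the number of components of \<open>\<Sigma>\<close>. The remaining identities between the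
  exponents are Euler characteristic bookkeeping.\<close>

section \<open>Orbits and the sign of a permutation\<close>

lemma permutation_iff_bij: "permutation (p :: 'a::finite \<Rightarrow> 'a) \<longleftrightarrow> bij p"
  by (simp add: permutation)

lemma orbit_self: "x \<in> orbit p x"
  unfolding orbit_def by (auto intro: exI[of _ 0])

lemma funpow_in_orbit: "(p ^^ k) x \<in> orbit p x"
  unfolding orbit_def by auto

lemma orbit_step:
  assumes "y \<in> orbit p x"
  shows "p y \<in> orbit p x"
proof -
  obtain k where "y = (p ^^ k) x" using assms unfolding orbit_def by auto
  then show ?thesis using funpow_in_orbit[where p=p and k="Suc k" and x=x] by simp
qed

lemma orbit_least:
  assumes "x \<in> S" and "\<And>y. y \<in> S \<Longrightarrow> p y \<in> S"
  shows "orbit p x \<subseteq> S"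
proof
  fix y assume "y \<in> orbit p x"
  then obtain k where "y = (p ^^ k) x" unfolding orbit_def by auto
  moreover have "(p ^^ k) x \<in> S" for k by (induction k) (use assms in auto)
  ultimately show "y \<in> S" by simp
qed

lemma orbit_subset_orbit: "y \<in> orbit p x \<Longrightarrow> orbit p y \<subseteq> orbit p x"
  by (rule orbit_least) (auto intro: orbit_step)

lemma orbit_sym:
  assumes "permutation p" and "y \<in> orbit p x"
  shows "x \<in> orbit p y"
proof -
  obtain n where n: "p ^^ n = id" "n > 0" using permutation_is_nilpotent[OF assms(1)] by blast
  obtain k where k: "y = (p ^^ k) x" using assms(2) unfolding orbit_def by auto
  have "(p ^^ (n * k - k)) y = (p ^^ (n * k - k + k)) x" by (simp add: k funpow_add)
  also have "n * k - k + k = n * k" using n(2) by simp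
  also have "p ^^ (n * k) = id" by (simp add: funpow_mult[symmetric] n(1))
  finally show ?thesis using funpow_in_orbit[where p=p and k="n * k - k" and x=y] by simp
qed

lemma orbit_eq:
  assumes "permutation p" and "y \<in> orbit p x"
  shows "orbit p y = orbit p x"
  using orbit_subset_orbit[OF assms(2)] orbit_subset_orbit[OF orbit_sym[OF assms]] by blast

lemma orbit_fixpoint: "p x = x \<Longrightarrow> orbit p x = {x}"
proof -
  assume "p x = x"
  then have "(p ^^ k) x = x" for k by (induction k) simp_all
  then show ?thesis unfolding orbit_def by auto
qed

lemma orbit_involution: "f (f x) = x \<Longrightarrow> orbit f x = {x, f x}"
proof
  assume ff: "f (f x) = x"
  show "orbit f x \<subseteq> {x, f x}" by (rule orbit_least) (use ff in auto)
  show "{x, f x} \<subseteq> orbit f x" by (simp add: orbit_self orbit_step)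
qed

text \<open>Composing with the transposition of \<open>a\<close> and \<open>p a\<close> cuts \<open>a\<close> out of its orbit.\<close>

lemma orbits_transpose_comp:
  fixes p :: "'a::finite \<Rightarrow> 'a"
  assumes p: "permutation p" and pa: "p a \<noteq> a"
  defines "q \<equiv> Transposition.transpose a (p a) \<circ> p"
  shows "range (orbit q) = insert {a} (insert (orbit p a - {a}) (range (orbit p) - {orbit p a}))"
proof -
  let ?O = "orbit p a"
  have q_perm: "permutation q" unfolding q_def by (intro permutation_compose permutation_swap_id p)
  have q_out: "q x = p x" if "x \<noteq> a" "p x \<noteq> a" for x
  proof -
    have "inj p" using p by (simp add: permutation_iff_bij bij_is_inj)
    then have "p x \<noteq> p a" using that(1) by (metis injD)
    then show ?thesis unfolding q_def using that by (simp add: transpose_def)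
  qed
  have pa_O: "p a \<in> ?O - {a}" using pa orbit_step[OF orbit_self] by simp
  have O_eq: "orbit p y = ?O" if "y \<in> ?O" for y using orbit_eq[OF p that] .
  have q_a: "orbit q a = {a}" by (rule orbit_fixpoint) (simp add: q_def)
  have q_pa: "orbit q (p a) = ?O - {a}"
  proof
    show "orbit q (p a) \<subseteq> ?O - {a}"
    proof (rule orbit_least[OF pa_O])
      fix y assume y: "y \<in> ?O - {a}"
      show "q y \<in> ?O - {a}"
      proof (cases "p y = a")
        case True then show ?thesis using pa_O by (simp add: q_def)
      next
        case False then show ?thesis using q_out y orbit_step by auto
      qed
    qed
    have "(p ^^ j) a = a \<or> (p ^^ j) a \<in> orbit q (p a)" for j
    proof (induction j)
      case (Suc j)
      consider "(p ^^ j) a = a" | "(p ^^ j) a \<in> orbit q (p a)" "p ((p ^^ j) a) = a"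
        | "(p ^^ j) a \<in> orbit q (p a)" "(p ^^ j) a \<noteq> a" "p ((p ^^ j) a) \<noteq> a"
        using Suc.IH by blast
      then show ?case
        by cases (use orbit_self[of "p a" q] orbit_step[of "(p ^^ j) a" q "p a"] q_out in auto)
    qed simp
    then show "?O - {a} \<subseteq> orbit q (p a)" unfolding orbit_def by auto
  qed
  have q_other: "orbit q x = orbit p x" if "x \<notin> ?O" for x
  proof -
    have outside: "y \<notin> ?O" if "y \<in> orbit p x" for y
      using O_eq orbit_eq[OF p that] orbit_self[of x p] \<open>x \<notin> ?O\<close> by blast
    have "(q ^^ k) x = (p ^^ k) x" for k
    proof (induction k)
      case (Suc k)
      have "(p ^^ k) x \<noteq> a" "p ((p ^^ k) x) \<noteq> a"
        using outside[OF funpow_in_orbit] outside[OF orbit_step[OF funpow_in_orbit]] orbit_self[of a p]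
        by auto
      then show ?case using Suc q_out by simp
    qed simp
    then show ?thesis unfolding orbit_def by simp
  qed
  show ?thesis
  proof (intro equalityI subsetI)
    fix S assume "S \<in> range (orbit q)"
    then obtain x where x: "S = orbit q x" by auto
    show "S \<in> insert {a} (insert (?O - {a}) (range (orbit p) - {?O}))"
    proof (cases "x \<in> ?O")
      case True
      then show ?thesis using q_a q_pa orbit_eq[OF q_perm, of x "p a"] x by (cases "x = a") auto
    next
      case False
      then show ?thesis using q_other[OF False] x orbit_self[of x p] by auto
    qed
  next
    fix S assume "S \<in> insert {a} (insert (?O - {a}) (range (orbit p) - {?O}))"
    then consider "S = orbit q a" | "S = orbit q (p a)" | x where "S = orbit p x" "orbit p x \<noteq> ?O"
      using q_a q_pa by auto
    then show "S \<in> range (orbit q)"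
    proof cases
      case (3 x)
      then have "x \<notin> ?O" using O_eq by blast
      then have "orbit q x = orbit p x" by (rule q_other)
      then show ?thesis using 3(1) by (metis rangeI)
    qed auto
  qed
qed

lemma card_orbits_transpose_comp:
  fixes p :: "'a::finite \<Rightarrow> 'a"
  assumes p: "permutation p" and pa: "p a \<noteq> a"
  shows "card (range (orbit (Transposition.transpose a (p a) \<circ> p))) = card (range (orbit p)) + 1"
proof -
  let ?O = "orbit p a"
  have pa_O: "p a \<in> ?O - {a}" using pa orbit_step[OF orbit_self] by simp
  have new1: "{a} \<notin> range (orbit p) - {?O}"
  proof
    assume "{a} \<in> range (orbit p) - {?O}"
    then obtain y where "orbit p y = {a}" "orbit p y \<noteq> ?O" by auto
    then show False using orbit_eq[OF p, of a y] by simp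
  qed
  have new2: "?O - {a} \<notin> range (orbit p) - {?O}"
  proof
    assume "?O - {a} \<in> range (orbit p) - {?O}"
    then obtain y where y: "orbit p y = ?O - {a}" "orbit p y \<noteq> ?O" by auto
    then have "orbit p (p a) = orbit p y" using orbit_eq[OF p, of "p a" y] pa_O by simp
    then show False using orbit_eq[OF p, of "p a" a] pa_O y(2) by simp
  qed
  have new3: "{a} \<noteq> ?O - {a}" by auto
  have "card (range (orbit p) - {?O}) + 1 = card (range (orbit p))"
    using card_Diff_singleton[of ?O "range (orbit p)"] card_gt_0_iff[of "range (orbit p)"] by auto
  then show ?thesis
    unfolding orbits_transpose_comp[OF assms] using new1 new2 new3 by (simp add: card_insert_if)
qed

lemma sign_eq_card_orbits:
  fixes p :: "'a::finite \<Rightarrow> 'a"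
  assumes "permutation p"
  shows "sign p = (-1) ^ (CARD('a) + card (range (orbit p)))"
  using assms
proof (induction "card {x. p x \<noteq> x}" arbitrary: p rule: less_induct)
  case less
  show ?case
  proof (cases "p = id")
    case True
    then have "orbit p x = {x}" for x by (simp add: orbit_fixpoint)
    then have "range (orbit p) = (\<lambda>x. {x}) ` UNIV" by auto
    then have "card (range (orbit p)) = CARD('a)" by (simp add: card_image)
    then show ?thesis using True by (simp flip: mult_2)
  next
    case False
    then obtain a where pa: "p a \<noteq> a" by (auto simp: fun_eq_iff)
    let ?q = "Transposition.transpose a (p a) \<circ> p"
    have q: "permutation ?q" by (intro permutation_compose permutation_swap_id less.prems)
    have "{x. ?q x \<noteq> x} \<subseteq> {x. p x \<noteq> x} - {a}"
    proof
      fix x assume "x \<in> {x. ?q x \<noteq> x}"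
      then have qx: "?q x \<noteq> x" by simp
      then have xa: "x \<noteq> a" by auto
      moreover have "p x \<noteq> x"
      proof
        assume px: "p x = x"
        have "inj p" using less.prems by (simp add: permutation_iff_bij bij_is_inj)
        then have "x \<noteq> p a" using pa px by (metis injD)
        then show False using qx px xa by (simp add: transpose_def)
      qed
      ultimately show "x \<in> {x. p x \<noteq> x} - {a}" by simp
    qed
    also have "\<dots> \<subset> {x. p x \<noteq> x}" using pa by auto
    finally have "{x. ?q x \<noteq> x} \<subset> {x. p x \<noteq> x}" .
    then have "card {x. ?q x \<noteq> x} < card {x. p x \<noteq> x}" by (simp add: psubset_card_mono)
    from less.hyps[OF this q] have "sign ?q = (-1) ^ (CARD('a) + card (range (orbit ?q)))" .
    moreover have "sign ?q = - sign p"
      using sign_compose[OF permutation_swap_id less.prems, of a "p a"] pa by (simp add: sign_swap_id)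
    ultimately show ?thesis using card_orbits_transpose_comp[OF less.prems pa] by simp
  qed
qed

lemma neg_one_power_eq_iff: "(-1 :: int) ^ a = (-1) ^ b \<longleftrightarrow> even a = even b"
  by (simp add: minus_one_power_iff)

definition restrict_perm :: "'a set \<Rightarrow> ('a \<Rightarrow> 'a) \<Rightarrow> 'a \<Rightarrow> 'a" where
  "restrict_perm D f x = (if x \<in> D then f x else x)"

lemma permutation_restrict_perm:
  fixes f :: "'a::finite \<Rightarrow> 'a"
  assumes "inj_on f D" and "f ` D \<subseteq> D"
  shows "permutation (restrict_perm D f)"
proof -
  have "inj (restrict_perm D f)"
    using assms by (auto simp: restrict_perm_def inj_on_def split: if_splits)
  then show ?thesis by (simp add: permutation_iff_bij bij_def finite_UNIV_inj_surj)
qed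

lemma orbit_restrict_perm:
  assumes "x \<in> D" and "f ` D \<subseteq> D"
  shows "orbit (restrict_perm D f) x = orbit f x"
proof -
  have "(restrict_perm D f ^^ k) x = (f ^^ k) x \<and> (f ^^ k) x \<in> D" for k
    by (induction k) (use assms in \<open>auto simp: restrict_perm_def\<close>)
  then show ?thesis unfolding orbit_def by simp
qed

lemma card_orbits_restrict_perm:
  fixes f :: "'a::finite \<Rightarrow> 'a"
  assumes "f ` D \<subseteq> D"
  shows "card (range (orbit (restrict_perm D f))) = card (orbit f ` D) + card (- D)"
proof -
  let ?r = "restrict_perm D f"
  have "orbit ?r ` D = orbit f ` D"
    using orbit_restrict_perm[OF _ assms] by (rule image_cong[OF refl])
  moreover have "orbit ?r ` (- D) = (\<lambda>x. {x}) ` (- D)"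
    by (rule image_cong[OF refl], rule orbit_fixpoint) (simp add: restrict_perm_def)
  moreover have "range (orbit ?r) = orbit ?r ` D \<union> orbit ?r ` (- D)"
    by (simp flip: image_Un)
  moreover have "orbit f ` D \<inter> (\<lambda>x. {x}) ` (- D) = {}"
  proof -
    have "orbit f x \<noteq> {y}" if "x \<in> D" "y \<notin> D" for x y
      using orbit_self[of x f] that by auto
    then show ?thesis by auto
  qed
  ultimately have "card (range (orbit ?r)) = card (orbit f ` D) + card ((\<lambda>x. {x}) ` (- D))"
    by (simp add: card_Un_disjoint)
  then show ?thesis by (simp add: card_image)
qed

lemma sign_restrict_perm:
  fixes f :: "'a::finite \<Rightarrow> 'a"
  assumes "inj_on f D" and "f ` D \<subseteq> D"
  shows "sign (restrict_perm D f) = (-1) ^ (card D + card (orbit f ` D))"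
proof -
  have "CARD('a) = card D + card (- D)"
    using card_Un_disjoint[of D "- D"] by simp
  then show ?thesis
    using sign_eq_card_orbits[OF permutation_restrict_perm[OF assms]]
      card_orbits_restrict_perm[OF assms(2)]
    by (simp add: power_add power_mult_distrib flip: mult_2)
qed

lemma induced_rot_first_return:
  fixes \<sigma> :: "'a::finite \<Rightarrow> 'a"
  assumes "permutation \<sigma>" and "d \<in> D"
  obtains k where "0 < k" "induced_rot \<sigma> D d = (\<sigma> ^^ k) d" "(\<sigma> ^^ k) d \<in> D"
    "\<And>j. 0 < j \<Longrightarrow> j < k \<Longrightarrow> (\<sigma> ^^ j) d \<notin> D"
proof -
  let ?P = "\<lambda>k. 0 < k \<and> (\<sigma> ^^ k) d \<in> D"
  obtain n where "\<sigma> ^^ n = id" "0 < n" using permutation_is_nilpotent[OF assms(1)] by blast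
  then have "?P n" using assms(2) by simp
  then have "?P (Least ?P)" by (rule LeastI)
  moreover have "(\<sigma> ^^ j) d \<notin> D" if "0 < j" "j < Least ?P" for j
    using not_less_Least[OF that(2)] that(1) by blast
  ultimately show ?thesis using that[of "Least ?P"] unfolding induced_rot_def by blast
qed

lemma induced_rot_mem:
  fixes \<sigma> :: "'a::finite \<Rightarrow> 'a"
  assumes "permutation \<sigma>" and "d \<in> D"
  shows "induced_rot \<sigma> D d \<in> D"
  using induced_rot_first_return[OF assms] by metis

lemma inj_on_induced_rot:
  fixes \<sigma> :: "'a::finite \<Rightarrow> 'a"
  assumes \<sigma>: "permutation \<sigma>"
  shows "inj_on (induced_rot \<sigma> D) D"
proof -
  have "d = d'"
    if d: "d \<in> D" "0 < k" "induced_rot \<sigma> D d = (\<sigma> ^^ k) d"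
      and d': "d' \<in> D" "induced_rot \<sigma> D d' = (\<sigma> ^^ k') d'" "\<And>j. 0 < j \<Longrightarrow> j < k' \<Longrightarrow> (\<sigma> ^^ j) d' \<notin> D"
      and "k \<le> k'" and eq: "induced_rot \<sigma> D d = induced_rot \<sigma> D d'"
    for d d' k k'
  proof -
    have "(\<sigma> ^^ k) ((\<sigma> ^^ (k' - k)) d') = (\<sigma> ^^ (k + (k' - k))) d'"
      by (simp add: funpow_add)
    then have "(\<sigma> ^^ k) d = (\<sigma> ^^ k) ((\<sigma> ^^ (k' - k)) d')"
      using eq d(3) d'(2) \<open>k \<le> k'\<close> by simp
    then have "d = (\<sigma> ^^ (k' - k)) d'"
      using \<sigma> by (simp add: permutation_iff_bij bij_is_inj inj_eq)
    then show ?thesis using d(1,2) d'(3)[of "k' - k"] by fastforce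
  qed
  then show ?thesis
    by (intro inj_onI) (metis induced_rot_first_return[OF \<sigma>] nat_le_linear)
qed

lemma induced_rot_reaches:
  fixes \<sigma> :: "'a::finite \<Rightarrow> 'a"
  assumes \<sigma>: "permutation \<sigma>"
  shows "d \<in> D \<Longrightarrow> (\<sigma> ^^ m) d \<in> D \<Longrightarrow> \<exists>j. (induced_rot \<sigma> D ^^ j) d = (\<sigma> ^^ m) d"
proof (induction m arbitrary: d rule: less_induct)
  case (less m)
  show ?case
  proof (cases "m = 0")
    case True
    then show ?thesis by (metis funpow_0)
  next
    case False
    obtain k where k: "0 < k" "induced_rot \<sigma> D d = (\<sigma> ^^ k) d" "(\<sigma> ^^ k) d \<in> D"
      "\<And>j. 0 < j \<Longrightarrow> j < k \<Longrightarrow> (\<sigma> ^^ j) d \<notin> D"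
      using induced_rot_first_return[OF \<sigma> less.prems(1)] by blast
    have "k \<le> m" using k(4) False less.prems(2) by (meson not_le neq0_conv)
    moreover have "(\<sigma> ^^ (m - k)) ((\<sigma> ^^ k) d) = (\<sigma> ^^ (m - k + k)) d"
      by (simp add: funpow_add)
    ultimately have m: "(\<sigma> ^^ m) d = (\<sigma> ^^ (m - k)) (induced_rot \<sigma> D d)"
      by (simp add: k(2))
    obtain j where "(induced_rot \<sigma> D ^^ j) (induced_rot \<sigma> D d) = (\<sigma> ^^ (m - k)) (induced_rot \<sigma> D d)"
      using less.IH[of "m - k"] k(1,2,3) False less.prems(2) m by auto
    then have "(induced_rot \<sigma> D ^^ Suc j) d = (\<sigma> ^^ m) d"
      by (simp add: m funpow_Suc_right del: funpow.simps)
    then show ?thesis by blast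
  qed
qed

lemma orbit_induced_rot:
  fixes \<sigma> :: "'a::finite \<Rightarrow> 'a"
  assumes \<sigma>: "permutation \<sigma>" and "d \<in> D"
  shows "orbit (induced_rot \<sigma> D) d = D \<inter> orbit \<sigma> d"
proof
  show "orbit (induced_rot \<sigma> D) d \<subseteq> D \<inter> orbit \<sigma> d"
  proof (rule orbit_least)
    show "d \<in> D \<inter> orbit \<sigma> d" using assms(2) by (simp add: orbit_self)
    fix y assume y: "y \<in> D \<inter> orbit \<sigma> d"
    then obtain k where "induced_rot \<sigma> D y = (\<sigma> ^^ k) y"
      using induced_rot_first_return[OF \<sigma>] by blast
    then have "induced_rot \<sigma> D y \<in> orbit \<sigma> d"
      using y funpow_in_orbit[where p=\<sigma> and x=y] orbit_subset_orbit by fastforce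
    then show "induced_rot \<sigma> D y \<in> D \<inter> orbit \<sigma> d" using y induced_rot_mem[OF \<sigma>] by blast
  qed
  show "D \<inter> orbit \<sigma> d \<subseteq> orbit (induced_rot \<sigma> D) d"
  proof
    fix y assume "y \<in> D \<inter> orbit \<sigma> d"
    then obtain m where "(\<sigma> ^^ m) d \<in> D" "y = (\<sigma> ^^ m) d" unfolding orbit_def by auto
    then obtain j where "(induced_rot \<sigma> D ^^ j) d = y"
      using induced_rot_reaches[OF \<sigma> assms(2)] by blast
    then show "y \<in> orbit (induced_rot \<sigma> D) d" using funpow_in_orbit by metis
  qed
qed

definition equiv_closure :: "('a \<times> 'a) set \<Rightarrow> ('a \<times> 'a) set" where
  "equiv_closure S = (S \<union> S\<inverse>)\<^sup>*"

lemma equiv_equiv_closure: "equiv UNIV (equiv_closure S)"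
  unfolding equiv_closure_def equiv_def
  by (auto simp: refl_on_def sym_rtrancl sym_Un_converse trans_rtrancl)

lemma equiv_closure_refl [simp]: "(x, x) \<in> equiv_closure S"
  unfolding equiv_closure_def by simp

lemma equiv_closure_trans:
  "(x, y) \<in> equiv_closure S \<Longrightarrow> (y, z) \<in> equiv_closure S \<Longrightarrow> (x, z) \<in> equiv_closure S"
  unfolding equiv_closure_def by (rule rtrancl_trans)

lemma subset_equiv_closure: "S \<subseteq> equiv_closure S"
  unfolding equiv_closure_def by auto

lemma equiv_closure_least:
  assumes R: "equiv UNIV R" and "S \<subseteq> R"
  shows "equiv_closure S \<subseteq> R"
proof clarify
  have "S \<union> S\<inverse> \<subseteq> R" using assms by (auto elim: equivE symE)
  fix x y assume "(x, y) \<in> equiv_closure S"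
  then show "(x, y) \<in> R" unfolding equiv_closure_def
  proof (induction rule: rtrancl_induct)
    case base
    then show ?case using R by (simp add: equiv_def refl_on_def)
  next
    case (step y z)
    then show ?case using R \<open>S \<union> S\<inverse> \<subseteq> R\<close> unfolding equiv_def trans_def by blast
  qed
qed

lemma equiv_closure_mono: "S \<subseteq> T \<Longrightarrow> equiv_closure S \<subseteq> equiv_closure T"
  by (meson equiv_closure_least equiv_equiv_closure subset_equiv_closure subset_trans)

lemma card_quotient_kernel: "card (UNIV // kernel f) = card (range f)"
  unfolding quotient_kernel_eq_image by (rule card_image[OF inj_on_vimage_image])

lemma equiv_rtrancl: "sym T \<Longrightarrow> equiv UNIV (T\<^sup>*)"
  unfolding equiv_def by (simp add: refl_on_def sym_rtrancl trans_rtrancl)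

lemma equiv_closure_eq_kernel:
  fixes g :: "'a \<Rightarrow> 'b"
  assumes T: "sym T"
    and forth: "\<And>x y. (x, y) \<in> S \<Longrightarrow> (g x, g y) \<in> T\<^sup>*"
    and fibre: "\<And>x y. g x = g y \<Longrightarrow> (x, y) \<in> equiv_closure S"
    and lift: "\<And>a b. (a, b) \<in> T \<Longrightarrow> \<exists>e e'. a = g e \<and> b = g e' \<and> (e, e') \<in> equiv_closure S"
  shows "equiv_closure S = kernel (\<lambda>x. T\<^sup>* `` {g x})"
proof -
  have TT: "equiv UNIV (T\<^sup>*)" using T by (rule equiv_rtrancl)
  have kernel: "kernel (\<lambda>x. T\<^sup>* `` {g x}) = {(x, y). (g x, g y) \<in> T\<^sup>*}"
    unfolding kernel_def using equiv_class_eq_iff[OF TT] by auto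
  have "equiv_closure S \<subseteq> {(x, y). (g x, g y) \<in> T\<^sup>*}"
    using forth equiv_kernel[of "\<lambda>x. T\<^sup>* `` {g x}"] unfolding kernel
    by (intro equiv_closure_least) auto
  moreover have "(x, y) \<in> equiv_closure S" if "(g x, g y) \<in> T\<^sup>*" for x y
  proof -
    have "\<forall>y. w = g y \<longrightarrow> (x, y) \<in> equiv_closure S" if "(g x, w) \<in> T\<^sup>*" for w
      using that
    proof (induction rule: rtrancl_induct)
      case base
      then show ?case using fibre by simp
    next
      case (step w1 w2)
      show ?case
      proof (intro allI impI)
        fix y assume y: "w2 = g y"
        obtain e e' where e: "w1 = g e" "w2 = g e'" "(e, e') \<in> equiv_closure S"
          using lift[OF step.hyps(2)] by blast
        have "(x, e) \<in> equiv_closure S" using step.IH e(1) by simp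
        moreover have "(e', y) \<in> equiv_closure S" using fibre e(2) y by simp
        ultimately show "(x, y) \<in> equiv_closure S"
          using e(3) by (blast intro: equiv_closure_trans)
      qed
    qed
    then show ?thesis using that by blast
  qed
  ultimately show ?thesis unfolding kernel by auto
qed

lemma orbit_eq_equiv_closure:
  assumes p: "permutation p" and S: "\<And>y z. (y, z) \<in> S \<longleftrightarrow> z = p y"
  shows "orbit p x = equiv_closure S `` {x}"
proof
  show "orbit p x \<subseteq> equiv_closure S `` {x}"
  proof (rule orbit_least)
    show "x \<in> equiv_closure S `` {x}" by simp
    fix y assume "y \<in> equiv_closure S `` {x}"
    moreover have "(y, p y) \<in> equiv_closure S" using subset_equiv_closure S by blast
    ultimately show "p y \<in> equiv_closure S `` {x}" by (auto intro: equiv_closure_trans)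
  qed
  have "z \<in> orbit p y \<longleftrightarrow> orbit p z = orbit p y" for y z
    using orbit_eq[OF p, of z y] orbit_self[of z p] by auto
  then have "equiv UNIV {(y, z). z \<in> orbit p y}"
    by (simp add: equiv_def refl_on_def sym_def trans_def)
  moreover have "S \<subseteq> {(y, z). z \<in> orbit p y}"
    using S orbit_step[OF orbit_self] by auto
  ultimately have "equiv_closure S \<subseteq> {(y, z). z \<in> orbit p y}" by (rule equiv_closure_least)
  then show "equiv_closure S `` {x} \<subseteq> orbit p x" by blast
qed

section \<open>Rank--nullity and vectors constant on equivalence classes\<close>

lemma dim_image_add_dim_kernel:
  fixes L :: "'a::euclidean_space \<Rightarrow> 'b::euclidean_space"
  assumes L: "linear L" and S: "subspace S"
  shows "dim (L ` S) + dim {x \<in> S. L x = 0} = dim S"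
proof -
  let ?K = "{x \<in> S. L x = 0}"
  have K: "subspace ?K"
    using linear_subspace_kernel[OF L] S by (simp add: Collect_conj_eq subspace_inter)
  obtain B0 where B0: "B0 \<subseteq> ?K" "independent B0" "?K \<subseteq> span B0" "card B0 = dim ?K"
    using basis_exists by blast
  then obtain B where B: "B0 \<subseteq> B" "B \<subseteq> S" "independent B" "S \<subseteq> span B"
    using maximal_independent_subset_extend[of B0 S] by blast
  let ?C = "B - B0"
  have span_B0: "span B0 = ?K" using B0 K by (simp add: span_subspace)
  have span_C: "span ?C \<subseteq> S" using B(2) S by (meson Diff_subset span_minimal subset_trans)
  have finB: "finite B" using B(3) by (rule finiteI_independent)
  have card_C: "card ?C + card B0 = card B"
    using B(1) finB by (simp add: card_Diff_subset card_mono finite_subset)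
  have "span ?C \<inter> span B0 \<subseteq> {0}"
  proof -
    have "B \<subseteq> {x + y |x y. x \<in> span ?C \<and> y \<in> span B0}"
      using span_Un[of ?C B0] B(1) span_superset[of B] by (simp add: Un_absorb2)
    then have "card B \<le> dim {x + y |x y. x \<in> span ?C \<and> y \<in> span B0}"
      using B(3) by (rule independent_card_le_dim)
    moreover have "dim {x + y |x y. x \<in> span ?C \<and> y \<in> span B0} + dim (span ?C \<inter> span B0)
        = card ?C + card B0"
      using dim_sums_Int[OF subspace_span subspace_span, of ?C B0]
        dim_eq_card_independent[OF independent_mono[OF B(3) Diff_subset]]
        dim_eq_card_independent[OF B0(2)] by simp
    ultimately have "dim (span ?C \<inter> span B0) = 0" using card_C by linarith
    then show ?thesis by simp
  qed
  then have "inj_on L (span ?C)"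
    using span_C span_B0 by (auto simp: linear_inj_on_iff_eq_0[OF L subspace_span])
  then have "dim (L ` span ?C) = card ?C"
    using dim_image_eq[OF L, of "span ?C"]
      dim_eq_card_independent[OF independent_mono[OF B(3) Diff_subset]] by (simp add: span_span)
  moreover have "L ` S = L ` span ?C"
  proof
    show "L ` span ?C \<subseteq> L ` S" using span_C by blast
    show "L ` S \<subseteq> L ` span ?C"
    proof
      fix w assume "w \<in> L ` S"
      then obtain x where "x \<in> S" "w = L x" by blast
      moreover have "?C \<union> B0 = B" using B(1) by blast
      ultimately have "x \<in> span (?C \<union> B0)" using B(4) by auto
      then obtain y z where "x = y + z" "y \<in> span ?C" "z \<in> span B0" unfolding span_Un by blast
      then show "w \<in> L ` span ?C" using \<open>w = L x\<close> span_B0 linear_add[OF L] by auto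
    qed
  qed
  moreover have "dim S = card B" using B by (simp add: basis_card_eq_dim)
  ultimately show ?thesis
    using B0(4) card_C by simp
qed

definition class_constant :: "('d \<times> 'd) set \<Rightarrow> (real ^ 'd) set" where
  "class_constant R = {A. \<forall>x y. (x, y) \<in> R \<longrightarrow> A $ x = A $ y}"

definition indicator_vec :: "'d set \<Rightarrow> real ^ 'd" where
  "indicator_vec c = (\<chi> d. if d \<in> c then 1 else 0)"

lemma class_constantD: "A \<in> class_constant R \<Longrightarrow> (x, y) \<in> R \<Longrightarrow> A $ x = A $ y"
  unfolding class_constant_def by blast

lemma class_constant_equiv_closure: "class_constant (equiv_closure S) = class_constant S"
proof
  show "class_constant (equiv_closure S) \<subseteq> class_constant S"
    using subset_equiv_closure unfolding class_constant_def by blast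
  show "class_constant S \<subseteq> class_constant (equiv_closure S)"
  proof
    fix A assume "A \<in> class_constant S"
    moreover have "equiv UNIV {(x, y). A $ x = A $ y}" by (auto intro!: equivI refl_onI symI transI)
    ultimately have "equiv_closure S \<subseteq> {(x, y). A $ x = A $ y}"
      by (intro equiv_closure_least) (auto simp: class_constant_def)
    then show "A \<in> class_constant (equiv_closure S)" unfolding class_constant_def by auto
  qed
qed

lemma class_constant_antimono: "R \<subseteq> R' \<Longrightarrow> class_constant R' \<subseteq> class_constant R"
  unfolding class_constant_def by blast

lemma subspace_class_constant: "subspace (class_constant R)"
  unfolding subspace_def class_constant_def by auto

lemma mem_class_iff:
  assumes "equiv UNIV R" and "c \<in> UNIV // R"
  shows "d \<in> c \<longleftrightarrow> c = R `` {d}"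
proof -
  obtain x where "c = R `` {x}" using assms(2) by (rule quotientE)
  then show ?thesis using equiv_class_eq_iff[OF assms(1)] by auto
qed

lemma indicator_vec_class_constant:
  assumes "equiv UNIV R" and "c \<in> UNIV // R"
  shows "indicator_vec c \<in> class_constant R"
  unfolding class_constant_def indicator_vec_def
  using mem_class_iff[OF assms] equiv_class_eq_iff[OF assms(1)] by auto

lemma span_indicator_classes:
  assumes R: "equiv UNIV R"
  shows "span (indicator_vec ` (UNIV // R)) = class_constant R"
proof
  show "span (indicator_vec ` (UNIV // R)) \<subseteq> class_constant R"
    using indicator_vec_class_constant[OF R] by (intro span_minimal subspace_class_constant) auto
  show "class_constant R \<subseteq> span (indicator_vec ` (UNIV // R))"
  proof
    fix A assume A: "A \<in> class_constant R"
    define a where "a c = A $ (SOME x. x \<in> c)" for c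
    have "A = (\<Sum>c\<in>UNIV // R. a c *\<^sub>R indicator_vec c)"
    proof (subst vec_eq_iff, rule allI)
      fix d
      have dd: "(d, d) \<in> R" using R by (simp add: equiv_def refl_on_def)
      have "(SOME x. x \<in> R `` {d}) \<in> R `` {d}" by (rule someI[of _ d]) (simp add: dd)
      then have "a (R `` {d}) = A $ d" using A unfolding a_def class_constant_def by auto
      moreover have "indicator_vec c $ d = (if c = R `` {d} then 1 else 0)" if "c \<in> UNIV // R" for c
        using mem_class_iff[OF R that, of d] by (simp add: indicator_vec_def)
      then have "(\<Sum>c\<in>UNIV // R. a c *\<^sub>R indicator_vec c) $ d
          = (\<Sum>c\<in>UNIV // R. if c = R `` {d} then a c else 0)"
        unfolding sum_component by (intro sum.cong refl) simp
      moreover have "R `` {d} \<in> UNIV // R" by (rule quotientI) simp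
      ultimately show "A $ d = (\<Sum>c\<in>UNIV // R. a c *\<^sub>R indicator_vec c) $ d"
        by simp
    qed
    also have "\<dots> \<in> span (indicator_vec ` (UNIV // R))"
      by (intro span_sum span_scale span_base imageI)
    finally show "A \<in> span (indicator_vec ` (UNIV // R))" .
  qed
qed

lemma dim_class_constant:
  assumes R: "equiv UNIV R"
  shows "dim (class_constant R) = card (UNIV // R)"
proof -
  have nonempty: "c \<noteq> {}" if c: "c \<in> UNIV // R" for c
  proof -
    obtain x where "c = R `` {x}" using c by (rule quotientE)
    moreover have "(x, x) \<in> R" using R by (simp add: equiv_def refl_on_def)
    ultimately show ?thesis by blast
  qed
  have "indicator_vec c \<noteq> indicator_vec c'"
    if cc': "c \<in> UNIV // R" "c' \<in> UNIV // R" "c \<noteq> c'" for c c'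
  proof -
    obtain d where "d \<in> c" using nonempty[OF cc'(1)] by blast
    then have "d \<notin> c'" using cc' mem_class_iff[OF R] by blast
    then have "indicator_vec c $ d \<noteq> indicator_vec c' $ d"
      using \<open>d \<in> c\<close> by (simp add: indicator_vec_def)
    then show ?thesis by auto
  qed
  then have inj: "inj_on indicator_vec (UNIV // R)" unfolding inj_on_def by blast
  have indep: "independent (indicator_vec ` (UNIV // R))"
  proof (rule pairwise_orthogonal_independent)
    show "pairwise orthogonal (indicator_vec ` (UNIV // R))"
    proof (rule pairwiseI, clarify)
      fix c c' assume cc: "c \<in> UNIV // R" "c' \<in> UNIV // R" "indicator_vec c \<noteq> indicator_vec c'"
      then have "c \<noteq> c'" by blast
      then have "c \<inter> c' = {}" using mem_class_iff[OF R cc(1)] mem_class_iff[OF R cc(2)] by blast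
      then show "orthogonal (indicator_vec c) (indicator_vec c')"
        unfolding orthogonal_def inner_vec_def indicator_vec_def by (auto intro!: sum.neutral)
    qed
    show "0 \<notin> indicator_vec ` (UNIV // R)"
    proof
      assume "0 \<in> indicator_vec ` (UNIV // R)"
      then obtain c where c: "c \<in> UNIV // R" "0 = indicator_vec c" by (rule imageE)
      obtain d where "d \<in> c" using nonempty[OF c(1)] by blast
      then have "indicator_vec c $ d = 1" by (simp add: indicator_vec_def)
      then show False using c(2)[symmetric] by simp
    qed
  qed
  have "dim (span (indicator_vec ` (UNIV // R))) = card (UNIV // R)"
    unfolding dim_span_eq_card_independent[OF indep] by (rule card_image[OF inj])
  then show ?thesis using span_indicator_classes[OF R] by simp
qed

text \<open>A 2-chain of \<open>\<Sigma>\<close> is encoded by the function on darts that gives each dart the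
  coefficient of the face containing it; its boundary is then the 1-chain
  \<open>d \<mapsto> A d - A (\<alpha> d)\<close>, antisymmetric under \<open>\<alpha>\<close> like the 1-chains in \<open>cycles\<close>.\<close>

definition boundary_map :: "('d::finite \<Rightarrow> 'd) \<Rightarrow> real ^ 'd \<Rightarrow> real ^ 'd" where
  "boundary_map \<alpha> A = (\<chi> d. A $ d - A $ (\<alpha> d))"

lemma boundary_map_nth [simp]: "boundary_map \<alpha> A $ d = A $ d - A $ (\<alpha> d)"
  by (simp add: boundary_map_def)

lemma linear_boundary_map: "linear (boundary_map \<alpha>)"
  by (rule linearI) (simp_all add: vec_eq_iff algebra_simps)

lemma face_chain_eq_boundary_map: "face_chain \<alpha> f = boundary_map \<alpha> (indicator_vec f)"
  by (simp add: face_chain_def indicator_vec_def vec_eq_iff)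

locale rotation_system =
  fixes V :: "'v set" and vert :: "'d::finite \<Rightarrow> 'v" and \<sigma> \<alpha> :: "'d \<Rightarrow> 'd"
  assumes ribbon_graph: "ribbon_graph V vert \<sigma> \<alpha>"
begin

lemma finite_V: "finite V"
  using ribbon_graph by (simp add: ribbon_graph_def)

lemma vert_in_V: "vert d \<in> V"
  using ribbon_graph by (simp add: ribbon_graph_def)

lemma bij_\<sigma>: "bij \<sigma>"
  using ribbon_graph by (simp add: ribbon_graph_def)

lemma vert_\<sigma>: "vert (\<sigma> d) = vert d"
  using ribbon_graph by (simp add: ribbon_graph_def)

lemma vert_transitive: "vert d = vert d' \<Longrightarrow> \<exists>n. (\<sigma> ^^ n) d = d'"
  using ribbon_graph unfolding ribbon_graph_def by blast

lemma \<alpha>_\<alpha>: "\<alpha> (\<alpha> d) = d"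
  using ribbon_graph by (simp add: ribbon_graph_def)

lemma \<alpha>_neq: "\<alpha> d \<noteq> d"
  using ribbon_graph by (simp add: ribbon_graph_def)

lemma permutation_\<sigma>: "permutation \<sigma>"
  using bij_\<sigma> by (simp add: permutation_iff_bij)

lemma inj_\<alpha>: "inj \<alpha>"
  by (rule injI) (metis \<alpha>_\<alpha>)

lemma orbit_\<sigma>: "orbit \<sigma> d = {d'. vert d' = vert d}"
proof
  show "orbit \<sigma> d \<subseteq> {d'. vert d' = vert d}" by (rule orbit_least) (simp_all add: vert_\<sigma>)
  show "{d'. vert d' = vert d} \<subseteq> orbit \<sigma> d"
  proof
    fix d' assume "d' \<in> {d'. vert d' = vert d}"
    then obtain n where "(\<sigma> ^^ n) d = d'" using vert_transitive[of d d'] by auto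
    then show "d' \<in> orbit \<sigma> d" using funpow_in_orbit[where p=\<sigma> and k=n and x=d] by simp
  qed
qed

lemma edge_eq:
  assumes "h \<in> edges \<alpha>" and "d \<in> h"
  shows "h = {d, \<alpha> d}"
proof -
  obtain e where "h = {e, \<alpha> e}" using assms(1) unfolding edges_def by blast
  then show ?thesis using assms(2) \<alpha>_\<alpha>[of e] by auto
qed

lemma \<alpha>_in_Union:
  assumes "H \<subseteq> edges \<alpha>" and "d \<in> \<Union>H"
  shows "\<alpha> d \<in> \<Union>H"
proof -
  obtain h where h: "h \<in> H" "d \<in> h" using assms(2) by blast
  then have "h = {d, \<alpha> d}" using assms(1) by (intro edge_eq) auto
  then show ?thesis using h by blast
qed

lemma card_Union_edges:
  assumes "H \<subseteq> edges \<alpha>"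
  shows "card (\<Union>H) = 2 * card H"
proof -
  have "disjnt h h'" if "h \<in> H" "h' \<in> H" "h \<noteq> h'" for h h'
  proof (rule ccontr)
    assume "\<not> disjnt h h'"
    then obtain d where "d \<in> h" "d \<in> h'" unfolding disjnt_def by blast
    then show False using edge_eq[of h d] edge_eq[of h' d] that assms by auto
  qed
  then have "card (\<Union>H) = (\<Sum>h\<in>H. card h)"
    by (intro card_Union_disjoint) (simp_all add: pairwise_def)
  also have "\<dots> = (\<Sum>h\<in>H. 2)"
  proof (rule sum.cong[OF refl])
    fix h assume "h \<in> H"
    then obtain d where "h = {d, \<alpha> d}" using assms unfolding edges_def by blast
    then show "card h = 2" using \<alpha>_neq[of d] by simp
  qed
  finally show ?thesis by simp
qed

subsection \<open>Parity of \<open>s(H)\<close>\<close>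

lemma card_orbits_induced_rot: "card (orbit (induced_rot \<sigma> D) ` D) = card (vert ` D)"
proof -
  have "orbit (induced_rot \<sigma> D) d = {d' \<in> D. vert d' = vert d}" if "d \<in> D" for d
    using orbit_induced_rot[OF permutation_\<sigma> that] orbit_\<sigma> by auto
  then have "orbit (induced_rot \<sigma> D) ` D = (\<lambda>v. {d \<in> D. vert d = v}) ` vert ` D"
    unfolding image_image by (rule image_cong[OF refl])
  moreover have "inj_on (\<lambda>v. {d \<in> D. vert d = v}) (vert ` D)"
    by (rule inj_onI) blast
  ultimately show ?thesis by (simp add: card_image)
qed

lemma orbits_\<alpha>_Union:
  assumes H: "H \<subseteq> edges \<alpha>"
  shows "orbit \<alpha> ` \<Union>H = H"
proof (intro equalityI subsetI)
  fix e assume "e \<in> orbit \<alpha> ` \<Union>H"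
  then obtain d h where "h \<in> H" "d \<in> h" "e = orbit \<alpha> d" by blast
  then show "e \<in> H" using edge_eq[of h d] H orbit_involution[of \<alpha>, OF \<alpha>_\<alpha>] by auto
next
  fix h assume h: "h \<in> H"
  then obtain d where "h = {d, \<alpha> d}" using H unfolding edges_def by blast
  then show "h \<in> orbit \<alpha> ` \<Union>H" using h orbit_involution[of \<alpha>, OF \<alpha>_\<alpha>] by blast
qed

lemma even_vertices_edges_faces:
  assumes H: "H \<subseteq> edges \<alpha>"
  defines "U \<equiv> \<Union>H"
  shows "even (card (vert ` U) + card H + card (orbit (induced_rot \<sigma> U \<circ> \<alpha>) ` U))"
proof -
  let ?\<rho> = "induced_rot \<sigma> U"
  have \<alpha>U: "\<alpha> ` U \<subseteq> U" using \<alpha>_in_Union[OF H] U_def by auto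
  have \<rho>U: "?\<rho> ` U \<subseteq> U" using induced_rot_mem[OF permutation_\<sigma>] by auto
  have inj_\<rho>: "inj_on ?\<rho> U" by (rule inj_on_induced_rot[OF permutation_\<sigma>])
  have inj_\<alpha>U: "inj_on \<alpha> U" using inj_on_subset[OF inj_\<alpha>] by simp
  have inj_\<phi>: "inj_on (?\<rho> \<circ> \<alpha>) U" using comp_inj_on[OF inj_\<alpha>U] inj_on_subset[OF inj_\<rho> \<alpha>U] by blast
  have \<phi>U: "(?\<rho> \<circ> \<alpha>) ` U \<subseteq> U" using \<alpha>U \<rho>U by auto
  have comp: "restrict_perm U ?\<rho> \<circ> restrict_perm U \<alpha> = restrict_perm U (?\<rho> \<circ> \<alpha>)"
    using \<alpha>U by (auto simp: restrict_perm_def fun_eq_iff)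
  have "sign (restrict_perm U (?\<rho> \<circ> \<alpha>)) = sign (restrict_perm U ?\<rho>) * sign (restrict_perm U \<alpha>)"
    using sign_compose[OF permutation_restrict_perm[OF inj_\<rho> \<rho>U] permutation_restrict_perm[OF inj_\<alpha>U \<alpha>U]]
    by (simp add: comp)
  moreover have "sign (restrict_perm U ?\<rho>) = (-1) ^ (card U + card (vert ` U))"
    using sign_restrict_perm[OF inj_\<rho> \<rho>U] card_orbits_induced_rot by simp
  moreover have "sign (restrict_perm U \<alpha>) = (-1) ^ (card U + card H)"
    using sign_restrict_perm[OF inj_\<alpha>U \<alpha>U] orbits_\<alpha>_Union[OF H] U_def by simp
  ultimately have "(-1::int) ^ (card U + card (orbit (?\<rho> \<circ> \<alpha>) ` U))
      = (-1) ^ (card U + card (vert ` U)) * (-1) ^ (card U + card H)"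
    using sign_restrict_perm[OF inj_\<phi> \<phi>U] by simp
  also have "\<dots> = (-1) ^ (2 * card U + (card (vert ` U) + card H))"
    by (simp add: power_add)
  finally have "even (card U + card (orbit (?\<rho> \<circ> \<alpha>) ` U))
      = even (2 * card U + (card (vert ` U) + card H))"
    unfolding neg_one_power_eq_iff .
  then show ?thesis using card_Union_edges[OF H, folded U_def] by presburger
qed

lemma even_s_nbhd:
  assumes H: "H \<subseteq> edges \<alpha>"
  shows "even (s_nbhd V vert \<sigma> \<alpha> H)"
proof -
  define U where "U = \<Union>H"
  let ?f = "card (orbit (induced_rot \<sigma> U \<circ> \<alpha>) ` U)" and ?i = "card (V - vert ` U)"
  have sub: "vert ` U \<subseteq> V" using vert_in_V by auto
  have "card V = card (vert ` U) + ?i"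
    using card_Diff_subset[OF _ sub] card_mono[OF finite_V sub] by simp
  moreover have "bc V vert \<sigma> \<alpha> H = ?f + ?i"
  proof -
    have "{v \<in> V. \<forall>d. vert d = v \<longrightarrow> d \<notin> U} = V - vert ` U" by blast
    moreover have "{orbit (induced_rot \<sigma> U \<circ> \<alpha>) d |d. d \<in> U} = orbit (induced_rot \<sigma> U \<circ> \<alpha>) ` U"
      by blast
    ultimately show ?thesis unfolding bc_def U_def[symmetric] by simp
  qed
  ultimately have "card V + card H + bc V vert \<sigma> \<alpha> H = (card (vert ` U) + card H + ?f) + 2 * ?i"
    by simp
  then have "even (card V + card H + bc V vert \<sigma> \<alpha> H)"
    using even_vertices_edges_faces[OF H, folded U_def] by presburger
  moreover have "s_nbhd V vert \<sigma> \<alpha> H = 2 * int (ncomp V vert \<alpha> H) + 2 * int (card H)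
      - int (card V + card H + bc V vert \<sigma> \<alpha> H)"
    unfolding s_nbhd_def by simp
  moreover have "even (int n) \<longleftrightarrow> even n" for n :: nat by simp
  ultimately show ?thesis by presburger
qed

subsection \<open>The kernel \<open>k(H)\<close>\<close>

definition face_rel :: "('d \<times> 'd) set" where
  "face_rel = {(d, \<sigma> (\<alpha> d)) | d. True}"

definition edge_rel :: "'d set \<Rightarrow> ('d \<times> 'd) set" where
  "edge_rel D = {(d, \<alpha> d) | d. d \<in> D}"

lemma face_rel_iff: "(x, y) \<in> face_rel \<longleftrightarrow> y = \<sigma> (\<alpha> x)"
  by (simp add: face_rel_def)

lemma edge_rel_iff: "(x, y) \<in> edge_rel D \<longleftrightarrow> x \<in> D \<and> y = \<alpha> x"
  by (auto simp: edge_rel_def)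

lemma permutation_face: "permutation (\<sigma> \<circ> \<alpha>)"
proof -
  have "bij \<alpha>" by (rule o_bij[of \<alpha>]) (simp_all add: fun_eq_iff \<alpha>_\<alpha>)
  then show ?thesis using bij_\<sigma> by (simp add: permutation_iff_bij bij_comp)
qed

lemma face_eq_equiv_closure: "orbit (\<sigma> \<circ> \<alpha>) d = equiv_closure face_rel `` {d}"
  by (rule orbit_eq_equiv_closure[OF permutation_face]) (simp add: face_rel_iff)

lemma faces_eq_quotient: "faces \<sigma> \<alpha> = UNIV // equiv_closure face_rel"
  unfolding faces_def quotient_def face_eq_equiv_closure by auto

lemma span_face_chains:
  "span (face_chain \<alpha> ` faces \<sigma> \<alpha>) = boundary_map \<alpha> ` class_constant face_rel"
proof -
  have "face_chain \<alpha> ` faces \<sigma> \<alpha> = boundary_map \<alpha> ` indicator_vec ` faces \<sigma> \<alpha>"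
    by (simp add: face_chain_eq_boundary_map image_image)
  then have "span (face_chain \<alpha> ` faces \<sigma> \<alpha>) = boundary_map \<alpha> ` span (indicator_vec ` faces \<sigma> \<alpha>)"
    by (simp add: span_linear_image[OF linear_boundary_map])
  also have "span (indicator_vec ` faces \<sigma> \<alpha>) = class_constant face_rel"
    unfolding faces_eq_quotient span_indicator_classes[OF equiv_equiv_closure]
    by (rule class_constant_equiv_closure)
  finally show ?thesis .
qed

lemma sum_fiber_\<sigma>: "(\<Sum>d\<in>{d. vert d = v}. f (\<sigma> d)) = (\<Sum>d\<in>{d. vert d = v}. f d)"
proof (rule sum.reindex_bij_betw)
  show "bij_betw \<sigma> {d. vert d = v} {d. vert d = v}"
  proof (rule bij_betw_imageI)
    show "inj_on \<sigma> {d. vert d = v}" using inj_on_subset[OF bij_is_inj[OF bij_\<sigma>] subset_UNIV] .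
    have "y \<in> \<sigma> ` {d. vert d = v}" if "vert y = v" for y
    proof
      show "y = \<sigma> (inv \<sigma> y)" using bij_\<sigma> by (simp add: bij_is_surj surj_f_inv_f)
      then show "inv \<sigma> y \<in> {d. vert d = v}" using that vert_\<sigma>[of "inv \<sigma> y"] by simp
    qed
    then show "\<sigma> ` {d. vert d = v} = {d. vert d = v}" using vert_\<sigma> by auto
  qed
qed

lemma cycles_Int_boundaries:
  assumes H: "H \<subseteq> edges \<alpha>"
  shows "cycles vert \<alpha> H \<inter> boundary_map \<alpha> ` class_constant face_rel
       = boundary_map \<alpha> ` class_constant (face_rel \<union> edge_rel (- \<Union>H))"
proof (intro equalityI subsetI)
  fix c assume "c \<in> cycles vert \<alpha> H \<inter> boundary_map \<alpha> ` class_constant face_rel"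
  then obtain A where A: "A \<in> class_constant face_rel" "c = boundary_map \<alpha> A" "c \<in> cycles vert \<alpha> H"
    by auto
  have "A $ d = A $ (\<alpha> d)" if "d \<notin> \<Union>H" for d
    using A(2,3) that unfolding cycles_def by auto
  then have "A \<in> class_constant (face_rel \<union> edge_rel (- \<Union>H))"
    using A(1) unfolding class_constant_def by (auto simp: edge_rel_iff)
  then show "c \<in> boundary_map \<alpha> ` class_constant (face_rel \<union> edge_rel (- \<Union>H))"
    using A(2) by blast
next
  fix c assume "c \<in> boundary_map \<alpha> ` class_constant (face_rel \<union> edge_rel (- \<Union>H))"
  then obtain A where A: "A \<in> class_constant (face_rel \<union> edge_rel (- \<Union>H))" "c = boundary_map \<alpha> A"
    by auto
  have face: "A \<in> class_constant face_rel"
    using A(1) class_constant_antimono[of face_rel] by blast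
  have "A $ (\<alpha> d) = A $ (\<sigma> d)" for d
    by (rule class_constantD[OF face]) (simp add: face_rel_iff \<alpha>_\<alpha>)
  then have "(\<Sum>d\<in>{d. vert d = v}. c $ d) = 0" for v
    using sum_fiber_\<sigma>[of "\<lambda>d. A $ d" v] A(2) by (simp add: sum_subtractf)
  moreover have "c $ d = 0" if "d \<notin> \<Union>H" for d
    using A that unfolding class_constant_def by (simp add: edge_rel_iff)
  moreover have "c $ (\<alpha> d) = - (c $ d)" for d
    using A(2) \<alpha>_\<alpha> by simp
  ultimately show "c \<in> cycles vert \<alpha> H \<inter> boundary_map \<alpha> ` class_constant face_rel"
    unfolding cycles_def using A(2) face by auto
qed

lemma kernel_boundary_map:
  "{A \<in> class_constant (face_rel \<union> edge_rel D). boundary_map \<alpha> A = 0}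
     = class_constant (face_rel \<union> edge_rel UNIV)"
  unfolding class_constant_def by (auto simp: vec_eq_iff edge_rel_iff)

lemma k_ker_eq:
  assumes H: "H \<subseteq> edges \<alpha>"
  shows "k_ker vert \<sigma> \<alpha> H + card (UNIV // equiv_closure (face_rel \<union> edge_rel UNIV))
       = card (UNIV // equiv_closure (face_rel \<union> edge_rel (- \<Union>H)))"
proof -
  have dim_eq: "dim (class_constant R) = card (UNIV // equiv_closure R)" for R :: "('d \<times> 'd) set"
    using dim_class_constant[OF equiv_equiv_closure, of R] class_constant_equiv_closure[of R] by simp
  let ?R = "face_rel \<union> edge_rel (- \<Union>H)"
  have "k_ker vert \<sigma> \<alpha> H = dim (boundary_map \<alpha> ` class_constant ?R)"
    unfolding k_ker_def span_face_chains cycles_Int_boundaries[OF H] ..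
  moreover have "dim (boundary_map \<alpha> ` class_constant ?R)
      + dim {A \<in> class_constant ?R. boundary_map \<alpha> A = 0} = dim (class_constant ?R)"
    by (rule dim_image_add_dim_kernel[OF linear_boundary_map subspace_class_constant])
  ultimately show ?thesis
    unfolding kernel_boundary_map dim_eq by linarith
qed

text \<open>Joining the 2-cells of \<open>\<Sigma>\<close> across the bands of all edges gives the components of \<open>G\<close>,
  and joining them across the edges outside \<open>H\<close> gives the regions of \<open>\<Sigma> \<setminus> H\<close>; the caps of
  isolated vertices are counted separately on both sides.\<close>

definition isolated :: "'v set" where
  "isolated = {v \<in> V. \<forall>d. vert d \<noteq> v}"

lemma \<sigma>_in_equiv_closure: "(d, \<sigma> d) \<in> equiv_closure (face_rel \<union> edge_rel UNIV)"
proof (rule equiv_closure_trans)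
  show "(d, \<alpha> d) \<in> equiv_closure (face_rel \<union> edge_rel UNIV)"
    using subset_equiv_closure by (force simp: edge_rel_iff)
  show "(\<alpha> d, \<sigma> d) \<in> equiv_closure (face_rel \<union> edge_rel UNIV)"
    using subset_equiv_closure by (force simp: face_rel_iff \<alpha>_\<alpha>)
qed

definition vertex_adj :: "('v \<times> 'v) set" where
  "vertex_adj = {(vert d, vert (\<alpha> d)) | d. d \<in> \<Union>(edges \<alpha>)}"

lemma vertex_adj_iff: "(a, b) \<in> vertex_adj \<longleftrightarrow> (\<exists>d. a = vert d \<and> b = vert (\<alpha> d))"
  unfolding vertex_adj_def edges_def by blast

lemma sym_vertex_adj: "sym vertex_adj"
  unfolding sym_def vertex_adj_iff by (metis \<alpha>_\<alpha>)

lemma vertex_classes_eq_kernel: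
  "equiv_closure (face_rel \<union> edge_rel UNIV) = kernel (\<lambda>x. vertex_adj\<^sup>* `` {vert x})"
proof (rule equiv_closure_eq_kernel[OF sym_vertex_adj])
  fix x y assume "(x, y) \<in> face_rel \<union> edge_rel UNIV"
  then have "(vert x, vert y) \<in> vertex_adj"
    unfolding vertex_adj_iff by (auto simp: face_rel_iff edge_rel_iff vert_\<sigma>)
  then show "(vert x, vert y) \<in> vertex_adj\<^sup>*" by blast
next
  fix x y assume "vert x = vert y"
  then obtain n where "(\<sigma> ^^ n) x = y" using vert_transitive by blast
  moreover have "(x, (\<sigma> ^^ k) x) \<in> equiv_closure (face_rel \<union> edge_rel UNIV)" for k
  proof (induction k)
    case (Suc k)
    then show ?case using \<sigma>_in_equiv_closure[of "(\<sigma> ^^ k) x"] by (auto intro: equiv_closure_trans)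
  qed simp
  ultimately show "(x, y) \<in> equiv_closure (face_rel \<union> edge_rel UNIV)" by blast
next
  fix a b assume "(a, b) \<in> vertex_adj"
  then obtain d where "a = vert d" "b = vert (\<alpha> d)" unfolding vertex_adj_iff by blast
  moreover have "(d, \<alpha> d) \<in> equiv_closure (face_rel \<union> edge_rel UNIV)"
    using subset_equiv_closure by (force simp: edge_rel_iff)
  ultimately show "\<exists>e e'. a = vert e \<and> b = vert e' \<and> (e, e') \<in> equiv_closure (face_rel \<union> edge_rel UNIV)"
    by blast
qed

lemma card_classes_add_isolated_eq_ncomp:
  "card (UNIV // equiv_closure (face_rel \<union> edge_rel UNIV)) + card isolated
     = ncomp V vert \<alpha> (edges \<alpha>)"
proof -
  let ?comp = "\<lambda>v. vertex_adj\<^sup>* `` {v}"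
  have "?comp v = {v}" if v: "v \<in> isolated" for v
  proof -
    have "w = v" if "(v, w) \<in> vertex_adj\<^sup>*" for w
      using that
    proof (cases rule: converse_rtranclE)
      case (step u)
      then show ?thesis using v by (auto simp: isolated_def vertex_adj_iff)
    qed simp
    then show ?thesis by auto
  qed
  then have "?comp ` isolated = (\<lambda>v. {v}) ` isolated" by simp
  moreover have "V = range vert \<union> isolated" using vert_in_V by (auto simp: isolated_def)
  then have "?comp ` V = ?comp ` (range vert \<union> isolated)" by (rule arg_cong)
  ultimately have "{?comp v | v. v \<in> V} = range (\<lambda>x. ?comp (vert x)) \<union> (\<lambda>v. {v}) ` isolated"
    unfolding Setcompr_eq_image image_Un image_image by simp
  moreover have "range (\<lambda>x. ?comp (vert x)) \<inter> (\<lambda>v. {v}) ` isolated = {}"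
    using equiv_rtrancl[OF sym_vertex_adj] by (auto simp: isolated_def equiv_def refl_on_def)
  moreover have "finite isolated" using finite_V by (simp add: isolated_def)
  ultimately show ?thesis
    unfolding ncomp_def vertex_adj_def[symmetric] vertex_classes_eq_kernel card_quotient_kernel
    by (simp add: card_Un_disjoint card_image)
qed

lemma faces_eq_range: "faces \<sigma> \<alpha> = range (orbit (\<sigma> \<circ> \<alpha>))"
  unfolding faces_def by auto

definition face_adj :: "'d set set \<Rightarrow> ('d set \<times> 'd set) set" where
  "face_adj H = {(f1, f2) | f1 f2 d. f1 \<in> faces \<sigma> \<alpha> \<and> f2 \<in> faces \<sigma> \<alpha> \<and>
                                    d \<notin> \<Union>H \<and> d \<in> f1 \<and> \<alpha> d \<in> f2}"

lemma face_adj_iff: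
  "(f1, f2) \<in> face_adj H \<longleftrightarrow>
     (\<exists>d. d \<notin> \<Union>H \<and> f1 = orbit (\<sigma> \<circ> \<alpha>) d \<and> f2 = orbit (\<sigma> \<circ> \<alpha>) (\<alpha> d))"
proof
  have face_eq: "orbit (\<sigma> \<circ> \<alpha>) d = f" if f: "f \<in> faces \<sigma> \<alpha>" "d \<in> f" for d f
  proof -
    obtain e where "f = orbit (\<sigma> \<circ> \<alpha>) e" using f(1) unfolding faces_eq_range by blast
    then show ?thesis using orbit_eq[OF permutation_face, of d e] f(2) by simp
  qed
  assume "(f1, f2) \<in> face_adj H"
  then obtain d where "f1 \<in> faces \<sigma> \<alpha>" "f2 \<in> faces \<sigma> \<alpha>" "d \<notin> \<Union>H" "d \<in> f1" "\<alpha> d \<in> f2"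
    unfolding face_adj_def by auto
  then show "\<exists>d. d \<notin> \<Union>H \<and> f1 = orbit (\<sigma> \<circ> \<alpha>) d \<and> f2 = orbit (\<sigma> \<circ> \<alpha>) (\<alpha> d)"
    using face_eq by metis
next
  assume "\<exists>d. d \<notin> \<Union>H \<and> f1 = orbit (\<sigma> \<circ> \<alpha>) d \<and> f2 = orbit (\<sigma> \<circ> \<alpha>) (\<alpha> d)"
  then obtain d where "d \<notin> \<Union>H" "f1 = orbit (\<sigma> \<circ> \<alpha>) d" "f2 = orbit (\<sigma> \<circ> \<alpha>) (\<alpha> d)" by blast
  then show "(f1, f2) \<in> face_adj H"
    unfolding face_adj_def faces_eq_range using orbit_self[of d] orbit_self[of "\<alpha> d"] by auto
qed

lemma sym_face_adj:
  assumes H: "H \<subseteq> edges \<alpha>"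
  shows "sym (face_adj H)"
proof (rule symI)
  fix f1 f2 assume "(f1, f2) \<in> face_adj H"
  then obtain d where d: "d \<notin> \<Union>H" "f1 = orbit (\<sigma> \<circ> \<alpha>) d" "f2 = orbit (\<sigma> \<circ> \<alpha>) (\<alpha> d)"
    unfolding face_adj_iff by blast
  have "\<alpha> d \<notin> \<Union>H" using \<alpha>_in_Union[OF H, of "\<alpha> d"] d(1) by (auto simp: \<alpha>_\<alpha>)
  then show "(f2, f1) \<in> face_adj H" unfolding face_adj_iff using d(2,3) \<alpha>_\<alpha>[of d] by metis
qed

lemma face_classes_eq_kernel:
  assumes H: "H \<subseteq> edges \<alpha>"
  shows "equiv_closure (face_rel \<union> edge_rel (- \<Union>H))
       = kernel (\<lambda>x. (face_adj H)\<^sup>* `` {orbit (\<sigma> \<circ> \<alpha>) x})"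
proof (rule equiv_closure_eq_kernel[OF sym_face_adj[OF H]])
  fix x y assume "(x, y) \<in> face_rel \<union> edge_rel (- \<Union>H)"
  then consider "y = (\<sigma> \<circ> \<alpha>) x" | "x \<notin> \<Union>H" "y = \<alpha> x" by (auto simp: face_rel_iff edge_rel_iff)
  then show "(orbit (\<sigma> \<circ> \<alpha>) x, orbit (\<sigma> \<circ> \<alpha>) y) \<in> (face_adj H)\<^sup>*"
  proof cases
    case 1
    then have "orbit (\<sigma> \<circ> \<alpha>) y = orbit (\<sigma> \<circ> \<alpha>) x"
      using orbit_eq[OF permutation_face orbit_step[OF orbit_self]] by simp
    then show ?thesis by simp
  next
    case 2
    then have "(orbit (\<sigma> \<circ> \<alpha>) x, orbit (\<sigma> \<circ> \<alpha>) y) \<in> face_adj H" unfolding face_adj_iff by blast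
    then show ?thesis by blast
  qed
next
  fix x y assume "orbit (\<sigma> \<circ> \<alpha>) x = orbit (\<sigma> \<circ> \<alpha>) y"
  then have "(x, y) \<in> equiv_closure face_rel"
    using orbit_self[of y] unfolding face_eq_equiv_closure by auto
  then show "(x, y) \<in> equiv_closure (face_rel \<union> edge_rel (- \<Union>H))"
    using equiv_closure_mono[of face_rel] by blast
next
  fix a b assume "(a, b) \<in> face_adj H"
  then obtain d where "d \<notin> \<Union>H" "a = orbit (\<sigma> \<circ> \<alpha>) d" "b = orbit (\<sigma> \<circ> \<alpha>) (\<alpha> d)"
    unfolding face_adj_iff by blast
  moreover have "(d, \<alpha> d) \<in> equiv_closure (face_rel \<union> edge_rel (- \<Union>H))"
    using \<open>d \<notin> \<Union>H\<close> subset_equiv_closure[of "face_rel \<union> edge_rel (- \<Union>H)"]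
    by (auto simp: edge_rel_iff)
  ultimately show "\<exists>e e'. a = orbit (\<sigma> \<circ> \<alpha>) e \<and> b = orbit (\<sigma> \<circ> \<alpha>) e'
      \<and> (e, e') \<in> equiv_closure (face_rel \<union> edge_rel (- \<Union>H))"
    by blast
qed

lemma card_classes_add_isolated_eq_ncomp_compl:
  assumes H: "H \<subseteq> edges \<alpha>"
  shows "card (UNIV // equiv_closure (face_rel \<union> edge_rel (- \<Union>H))) + card isolated
     = ncomp_compl V vert \<sigma> \<alpha> H"
proof -
  have "{(face_adj H)\<^sup>* `` {f} | f. f \<in> faces \<sigma> \<alpha>}
      = range (\<lambda>x. (face_adj H)\<^sup>* `` {orbit (\<sigma> \<circ> \<alpha>) x})"
    unfolding faces_eq_range by auto
  then show ?thesis
    unfolding ncomp_compl_def face_adj_def[symmetric] isolated_def[symmetric]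
      face_classes_eq_kernel[OF H] card_quotient_kernel by simp
qed

lemma k_ker_eq_ncomp_compl:
  assumes "H \<subseteq> edges \<alpha>"
  shows "int (k_ker vert \<sigma> \<alpha> H) = int (ncomp_compl V vert \<sigma> \<alpha> H) - int (ncomp V vert \<alpha> (edges \<alpha>))"
  using k_ker_eq[OF assms] card_classes_add_isolated_eq_ncomp_compl[OF assms]
    card_classes_add_isolated_eq_ncomp by linarith

text \<open>The divisions by 2 below are exact: \<open>s(H)\<close> and \<open>s(G)\<close>, hence also \<open>s\<^sup>\<perp>(H)\<close>, are even.\<close>

lemma nullity_eq:
  assumes H: "H \<subseteq> edges \<alpha>"
  shows "int (card H) - (int (card V) - int (ncomp V vert \<alpha> H))
       = genus_closed V vert \<sigma> \<alpha> + int (k_ker vert \<sigma> \<alpha> H)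
         + s_nbhd V vert \<sigma> \<alpha> H div 2 - s_perp V vert \<sigma> \<alpha> H div 2"
proof -
  have "int (card (edges \<alpha> - H)) = int (card (edges \<alpha>)) - int (card H)"
    using H by (simp add: card_Diff_subset card_mono)
  then have "s_perp V vert \<sigma> \<alpha> H = s_nbhd V vert \<sigma> \<alpha> (edges \<alpha>) + s_nbhd V vert \<sigma> \<alpha> H
      + 2 * int (k_ker vert \<sigma> \<alpha> H) - 2 * int (ncomp V vert \<alpha> H) + 2 * int (card V) - 2 * int (card H)"
    unfolding s_perp_def s_nbhd_def k_ker_eq_ncomp_compl[OF H] by simp
  moreover have "genus_closed V vert \<sigma> \<alpha> = s_nbhd V vert \<sigma> \<alpha> (edges \<alpha>) div 2"
    unfolding genus_closed_def s_nbhd_def ..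
  ultimately show ?thesis using even_s_nbhd[OF H] even_s_nbhd[OF order_refl] by auto
qed

end

lemma powi_regroup:
  fixes W Y Z :: real
  assumes "Y \<noteq> 0" and "n = g + k + a - b"
  shows "W * Y powi n * Z powi (2 * a) = Y powi g * (W * Y powi k * (Y * Z\<^sup>2) powi a * inverse Y powi b)"
proof -
  have "Y powi n = Y powi (g + k + a) * Y powi (- b)"
    using assms by (simp flip: power_int_add)
  also have "\<dots> = Y powi g * Y powi k * Y powi a * inverse Y powi b"
    using assms(1) by (simp add: power_int_add power_int_minus power_int_inverse)
  finally have "Y powi n = Y powi g * Y powi k * Y powi a * inverse Y powi b" .
  moreover have "Z powi (2 * a) = (Z\<^sup>2) powi a" by (simp add: power_int_mult)
  ultimately show ?thesis by (simp add: power_int_mult_distrib)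
qed

context rotation_system
begin

lemma BR_summand_eq:
  fixes X Y Z :: real
  assumes Y: "Y \<noteq> 0" and H: "H \<subseteq> edges \<alpha>"
  shows "(X - 1) powi (int (card V) - int (ncomp V vert \<alpha> (edges \<alpha>)) - (int (card V) - int (ncomp V vert \<alpha> H)))
        * Y powi (int (card H) - (int (card V) - int (ncomp V vert \<alpha> H)))
        * Z powi (int (ncomp V vert \<alpha> H) - int (bc V vert \<sigma> \<alpha> H)
                  + (int (card H) - (int (card V) - int (ncomp V vert \<alpha> H))))
      = Y powi genus_closed V vert \<sigma> \<alpha>
        * ((X - 1) powi (int (ncomp V vert \<alpha> H) - int (ncomp V vert \<alpha> (edges \<alpha>)))
           * Y powi int (k_ker vert \<sigma> \<alpha> H) * (Y * Z\<^sup>2) powi (s_nbhd V vert \<sigma> \<alpha> H div 2)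
           * inverse Y powi (s_perp V vert \<sigma> \<alpha> H div 2))"
proof -
  have X_exp: "int (card V) - int (ncomp V vert \<alpha> (edges \<alpha>)) - (int (card V) - int (ncomp V vert \<alpha> H))
      = int (ncomp V vert \<alpha> H) - int (ncomp V vert \<alpha> (edges \<alpha>))" by simp
  have Z_exp: "int (ncomp V vert \<alpha> H) - int (bc V vert \<sigma> \<alpha> H)
      + (int (card H) - (int (card V) - int (ncomp V vert \<alpha> H))) = 2 * (s_nbhd V vert \<sigma> \<alpha> H div 2)"
    using even_s_nbhd[OF H] unfolding s_nbhd_def by simp
  show ?thesis
    unfolding X_exp Z_exp by (rule powi_regroup[OF Y nullity_eq[OF H]])
qed

end

theorem lemma4p1:
  fixes V :: "'v set" and vert :: "'d::finite \<Rightarrow> 'v" and \<sigma> \<alpha> :: "'d \<Rightarrow> 'd"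
    and X Y Z :: real
  assumes "ribbon_graph V vert \<sigma> \<alpha>" and "Y \<noteq> 0"
  shows "BR V vert \<sigma> \<alpha> X Y Z =
         Y powi genus_closed V vert \<sigma> \<alpha> * P_poly V vert \<sigma> \<alpha> (X - 1) Y (Y * Z\<^sup>2) (inverse Y)"
proof -
  interpret rotation_system V vert \<sigma> \<alpha> by (rule rotation_system.intro) fact
  show ?thesis
    unfolding BR_def P_poly_def Let_def sum_distrib_left
    using BR_summand_eq[OF assms(2)] by (intro sum.cong) auto
qed

end
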